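(* For every $n\in\mathbb{N}$ and every real $t$ with $|t|<1$, \[ \frac{(\operatorname{arctanh} t)^n}{n!}=\sum_{k=0}^{\infty}\left(\sum_{\ell_{n-1}=0}^{k}\frac{1}{2\ell_{n-1}+n-1}\sum_{\ell_{n-2}=0}^{\ell_{n-1}}\frac{1}{2\ell_{n-2}+n-2}\cdots\sum_{\ell_2=0}^{\ell_3}\frac{1}{2\ell_2+2}\sum_{\ell_1=0}^{\ell_2}\frac{1}{2\ell_1+1}\right)\frac{t^{2k+n}}{2k+n}, \] i.e. the coefficient in parentheses is $\prod_{m=1}^{n-1}\sum_{\ell_m=0}^{\ell_{m+1}}\frac{1}{2\ell_m+m}$ (nested sums, with $\ell_n=k$), which is understood to be $1$ when $n=1$. *)

theory Defs
  imports Complex_Main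
begin

text \<open>nested_coeff m k is the nested sum with n = m + 1 and innermost-outer index l_n = k:
  nested_coeff 0 k = 1 (case n = 1), and
  nested_coeff (Suc m) k = sum over l = 0..k of 1/(2 l + m + 1) * nested_coeff m l.\<close>
fun nested_coeff :: "nat \<Rightarrow> nat \<Rightarrow> real" where
  "nested_coeff 0 k = 1"
| "nested_coeff (Suc m) k = (\<Sum>l=0..k. (1 / (2 * real l + real (Suc m))) * nested_coeff m l)"

end

theory Submission
  imports Defs "HOL-Analysis.FPS_Convergence"
begin

text \<open>Let A = \<Sum> X^j / j (over odd j) be the Taylor series of artanh and
  E_n = A^n / n!. Since A' (1 - X^2) = 1, the chain rule gives E_(n+1)' (1 - X^2) = E_n.
  Read coefficientwise, this says that the coefficients of X^(2k+n) in (2k + n) E_n obey the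
  telescoping recurrence that defines the nested sums, so by induction on n they are the
  nested sums; evaluating inside the radius of convergence 1 gives the theorem.\<close>

lemma sums_arith_progression_iff:
  fixes f :: "nat \<Rightarrow> 'a :: real_normed_vector"
  assumes "\<And>j. j < n \<or> odd (j - n) \<Longrightarrow> f j = 0"
  shows "(\<lambda>k. f (2 * k + n)) sums s \<longleftrightarrow> f sums s"
proof (rule sums_mono_reindex)
  show "strict_mono (\<lambda>k. 2 * k + n)" by (auto simp: strict_mono_def)
  fix j assume j: "j \<notin> range (\<lambda>k. 2 * k + n)"
  have "j < n \<or> odd (j - n)"
  proof (rule ccontr)
    assume "\<not> (j < n \<or> odd (j - n))"
    then have "n \<le> j" "even (j - n)" by auto
    then obtain k where "j = 2 * k + n" by (metis evenE le_add_diff_inverse2)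
    with j show False by blast
  qed
  then show "f j = 0" by (rule assms)
qed

definition artanh_fps :: "real fps" where
  "artanh_fps = Abs_fps (\<lambda>j. if odd j then 1 / real j else 0)"

lemma artanh_sums:
  fixes t :: real
  assumes "\<bar>t\<bar> < 1"
  shows "(\<lambda>k. t ^ (2 * k + 1) / real (2 * k + 1)) sums artanh t"
proof -
  define x where "x = (1 + t) / (1 - t)"
  have "x > 0" "(x - 1) / (x + 1) = t"
    using assms by (auto simp: x_def field_simps)
  then have "(\<lambda>k. 2 * (t ^ (2 * k + 1) / real (2 * k + 1))) sums (2 * artanh t)"
    using ln_series_quadratic[of x] by (simp add: artanh_def x_def)
  then show ?thesis
    by (subst (asm) sums_mult_iff) simp_all
qed

lemma artanh_fps_sums:
  fixes t :: real
  assumes "\<bar>t\<bar> < 1"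
  shows "(\<lambda>j. fps_nth artanh_fps j * t ^ j) sums artanh t"
proof -
  have "(\<lambda>k. fps_nth artanh_fps (2 * k + 1) * t ^ (2 * k + 1)) sums artanh t"
    using artanh_sums[OF assms] by (simp add: artanh_fps_def)
  moreover have "fps_nth artanh_fps j * t ^ j = 0" if "j < 1 \<or> odd (j - 1)" for j
    using that by (auto simp: artanh_fps_def elim: oddE)
  ultimately show ?thesis
    using sums_arith_progression_iff[of 1 "\<lambda>j. fps_nth artanh_fps j * t ^ j"] by simp
qed

lemma fps_conv_radius_artanh_fps:
  fixes t :: real
  assumes "\<bar>t\<bar> < 1"
  shows "ereal \<bar>t\<bar> < fps_conv_radius artanh_fps"
proof -
  define r where "r = (\<bar>t\<bar> + 1) / 2"
  have r: "\<bar>t\<bar> < r" "r < 1" using assms by (auto simp: r_def)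
  have "summable (\<lambda>j. fps_nth artanh_fps j * r ^ j)"
    using artanh_fps_sums r by (auto simp: sums_iff)
  then have "ereal (norm r) \<le> fps_conv_radius artanh_fps"
    unfolding fps_conv_radius_def by (rule conv_radius_geI)
  with r show ?thesis by (auto intro: less_le_trans[of "ereal \<bar>t\<bar>" "ereal r"])
qed

lemma eval_artanh_fps:
  fixes t :: real
  assumes "\<bar>t\<bar> < 1"
  shows "eval_fps artanh_fps t = artanh t"
  using artanh_fps_sums[OF assms] by (simp add: eval_fps_def sums_iff)

lemma fps_deriv_artanh_fps: "fps_deriv artanh_fps * (1 - fps_X ^ 2) = 1"
proof (rule fps_ext)
  fix j
  show "fps_nth (fps_deriv artanh_fps * (1 - fps_X ^ 2)) j = fps_nth 1 j"
    by (simp add: right_diff_distrib fps_X_power_mult_right_nth artanh_fps_def) presburger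
qed

definition artanh_power_coeff :: "nat \<Rightarrow> nat \<Rightarrow> real" where
  "artanh_power_coeff n j =
     (if n \<le> j \<and> even (j - n) then nested_coeff (n - 1) ((j - n) div 2) / real j else 0)"

lemma artanh_power_coeff_progression:
  "artanh_power_coeff n (2 * k + n) = nested_coeff (n - 1) k / real (2 * k + n)"
  by (simp add: artanh_power_coeff_def)

lemma artanh_power_coeff_eq_0:
  "j < n \<or> odd (j - n) \<Longrightarrow> artanh_power_coeff n j = 0"
  by (auto simp: artanh_power_coeff_def)

lemma nested_coeff_Suc_Suc:
  "nested_coeff (Suc m) (Suc k)
     = nested_coeff (Suc m) k + nested_coeff m (Suc k) / (2 * real (Suc k) + real (Suc m))"
  by simp

lemma artanh_power_coeff_recurrence:
  "real (Suc j) * artanh_power_coeff (Suc (Suc m)) (Suc j)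
     - (if j < 2 then 0 else real (Suc (j - 2)) * artanh_power_coeff (Suc (Suc m)) (Suc (j - 2)))
   = artanh_power_coeff (Suc m) j"
proof (cases "Suc m \<le> j \<and> even (j - Suc m)")
  case True
  then obtain k where j: "j = 2 * k + Suc m"
    by (metis evenE le_add_diff_inverse2)
  show ?thesis
  proof (cases k)
    case 0
    then show ?thesis
      by (auto simp: j artanh_power_coeff_def)
  next
    case (Suc i)
    have "Suc j = 2 * Suc i + Suc (Suc m)" "Suc (j - 2) = 2 * i + Suc (Suc m)"
      using j Suc by auto
    then have "real (Suc j) * artanh_power_coeff (Suc (Suc m)) (Suc j)
                 = nested_coeff (Suc m) (Suc i)"
      and "real (Suc (j - 2)) * artanh_power_coeff (Suc (Suc m)) (Suc (j - 2))
                 = nested_coeff (Suc m) i"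
      by (simp_all only: artanh_power_coeff_progression) (simp_all del: nested_coeff.simps)
    moreover have "artanh_power_coeff (Suc m) j
                     = nested_coeff m (Suc i) / (2 * real (Suc i) + real (Suc m))"
      using artanh_power_coeff_progression[of "Suc m" "Suc i"] by (simp add: j Suc)
    ultimately show ?thesis
      using j Suc by (simp only: nested_coeff_Suc_Suc) simp
  qed
next
  case False
  then show ?thesis
    by (auto simp: artanh_power_coeff_def)
qed

lemma fps_deriv_artanh_power_coeff:
  "fps_deriv (Abs_fps (artanh_power_coeff (Suc (Suc m)))) * (1 - fps_X ^ 2)
     = Abs_fps (artanh_power_coeff (Suc m))"
proof (rule fps_ext)
  fix j
  show "fps_nth (fps_deriv (Abs_fps (artanh_power_coeff (Suc (Suc m)))) * (1 - fps_X ^ 2)) j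
      = fps_nth (Abs_fps (artanh_power_coeff (Suc m))) j"
    using artanh_power_coeff_recurrence[of j m]
    by (cases "j < 2") (simp_all add: right_diff_distrib fps_X_power_mult_right_nth del: of_nat_Suc)
qed

lemma artanh_fps_power:
  assumes "n > 0"
  shows "fps_const (1 / fact n) * artanh_fps ^ n = Abs_fps (artanh_power_coeff n)"
  using assms
proof (induction n rule: nat_induct_non_zero)
  case 1
  show ?case
    by (rule fps_ext) (simp add: artanh_fps_def artanh_power_coeff_def)
next
  case (Suc n)
  define F where "F = fps_const (1 / fact (Suc n)) * artanh_fps ^ Suc n"
  define G where "G = Abs_fps (artanh_power_coeff (Suc n))"
  have "fps_deriv F
          = fps_const (1 / fact (Suc n) * of_nat (Suc n)) * fps_deriv artanh_fps * artanh_fps ^ n"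
    unfolding F_def fps_deriv_mult_const_left fps_deriv_power diff_Suc_1
    by (simp only: fps_const_mult[symmetric] mult.assoc)
  also have "1 / fact (Suc n) * of_nat (Suc n) = (1 / fact n :: real)"
    by simp
  finally have "fps_deriv F = fps_const (1 / fact n) * artanh_fps ^ n * fps_deriv artanh_fps"
    by (simp only: mult_ac)
  then have "fps_deriv F * (1 - fps_X ^ 2) = Abs_fps (artanh_power_coeff n)"
    by (simp add: fps_deriv_artanh_fps Suc.IH flip: mult.assoc)
  also have "\<dots> = fps_deriv G * (1 - fps_X ^ 2)"
    using \<open>n > 0\<close> fps_deriv_artanh_power_coeff[of "n - 1"] by (simp add: G_def)
  finally have "fps_deriv F = fps_deriv G"
    by (rule mult_right_cancel[THEN iffD1, rotated]) (simp add: fps_eq_iff exI[of _ 0])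
  then have "F = fps_const (fps_nth F 0 - fps_nth G 0) + G"
    by (simp only: fps_deriv_eq_iff)
  moreover have "fps_nth F 0 = 0" "fps_nth G 0 = 0"
    by (simp_all add: F_def G_def artanh_fps_def artanh_power_coeff_def)
  ultimately show ?case
    by (simp add: F_def G_def)
qed

lemma artanh_power_sums:
  fixes t :: real
  assumes "n > 0" and "\<bar>t\<bar> < 1"
  shows "(\<lambda>j. artanh_power_coeff n j * t ^ j) sums (artanh t ^ n / fact n)"
proof -
  define E where "E = fps_const (1 / fact n) * artanh_fps ^ n"
  have radius: "ereal \<bar>t\<bar> < fps_conv_radius (artanh_fps ^ n)"
    using fps_conv_radius_artanh_fps[OF assms(2)] fps_conv_radius_power by (rule less_le_trans)
  then have "ereal (norm t) < fps_conv_radius E"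
    by (simp add: E_def fps_conv_radius_cmult_left)
  moreover have "eval_fps E t = artanh t ^ n / fact n"
    using radius fps_conv_radius_artanh_fps[OF assms(2)]
    by (simp add: E_def eval_fps_mult eval_fps_power eval_artanh_fps[OF assms(2)])
  ultimately show ?thesis
    using sums_eval_fps[of t E] artanh_fps_power[OF assms(1)] by (simp add: E_def)
qed

theorem mainTheorem10:
  fixes n :: nat and t :: real
  assumes "n \<ge> 1" and "\<bar>t\<bar> < 1"
  shows "(\<lambda>k. nested_coeff (n - 1) k * t ^ (2 * k + n) / real (2 * k + n))
           sums (artanh t ^ n / fact n)"
proof -
  have "(\<lambda>j. artanh_power_coeff n j * t ^ j) sums (artanh t ^ n / fact n)"
    using assms by (intro artanh_power_sums) simp_all
  moreover have "artanh_power_coeff n j * t ^ j = 0" if "j < n \<or> odd (j - n)" for j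
    using that by (simp add: artanh_power_coeff_eq_0)
  ultimately have "(\<lambda>k. artanh_power_coeff n (2 * k + n) * t ^ (2 * k + n))
                     sums (artanh t ^ n / fact n)"
    using sums_arith_progression_iff[of n "\<lambda>j. artanh_power_coeff n j * t ^ j"] by simp
  then show ?thesis
    by (simp add: artanh_power_coeff_progression)
qed

end
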